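(* Let $\|\cdot\|$ be a norm on $\mathbb{R}^n$ which is $C^1$ (away from the origin) and strictly convex, and let $\mathsf{d}(x,y)=\|x-y\|$. Then $(\mathbb{R}^n,\mathsf{d})$ is locally-uniformly non-branching.
   Context: $\mathrm{Geo}(\mathsf{X},\mathsf{d})$ is the set of constant-speed length-minimising curves $\gamma:[0,1]\to\mathsf{X}$. A metric space $(\mathsf{X},\mathsf{d})$ is locally-uniformly non-branching if it is Polish and for every $x,y,z\in\mathsf{X}$ with $y\ne z$ and $\mathsf{d}(x,y)=\mathsf{d}(x,z)$ there exist $r>0$ and $\rho>0$ such that for all $x'\in B_r(x)$, $y'\in B_r(y)$, $z'\in B_r(z)$ there is $\gamma\in\mathrm{Geo}(\mathsf{X},\mathsf{d})$ with $\gamma(0)=x'$, $\gamma(1)=y'$ and $\liminf_{t\downarrow0}\frac{\mathsf{d}(\gamma(t),z')-\mathsf{d}(x',z')}{t}\ge-(1-\rho)\,\mathsf{d}(x',y')$. *)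

theory Defs
  imports "HOL-Analysis.Analysis"
begin

definition polish_metric :: "'a set \<Rightarrow> ('a \<Rightarrow> 'a \<Rightarrow> real) \<Rightarrow> bool" where
  "polish_metric X d \<longleftrightarrow> Metric_space X d \<and> Metric_space.mcomplete X d
     \<and> separable_space (Metric_space.mtopology X d)"

definition Geo :: "'a set \<Rightarrow> ('a \<Rightarrow> 'a \<Rightarrow> real) \<Rightarrow> (real \<Rightarrow> 'a) set" where
  "Geo X d = {\<gamma>. (\<forall>t\<in>{0..1}. \<gamma> t \<in> X) \<and>
     (\<forall>s\<in>{0..1}. \<forall>t\<in>{0..1}. d (\<gamma> s) (\<gamma> t) = \<bar>t - s\<bar> * d (\<gamma> 0) (\<gamma> 1))}"

definition open_mball :: "'a set \<Rightarrow> ('a \<Rightarrow> 'a \<Rightarrow> real) \<Rightarrow> 'a \<Rightarrow> real \<Rightarrow> 'a set" where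
  "open_mball X d x r = {y\<in>X. d x y < r}"

definition locally_uniformly_non_branching :: "'a set \<Rightarrow> ('a \<Rightarrow> 'a \<Rightarrow> real) \<Rightarrow> bool" where
  "locally_uniformly_non_branching X d \<longleftrightarrow> polish_metric X d \<and>
    (\<forall>x\<in>X. \<forall>y\<in>X. \<forall>z\<in>X. y \<noteq> z \<and> d x y = d x z \<longrightarrow>
      (\<exists>r>0. \<exists>\<rho>>0. \<forall>x'\<in>open_mball X d x r. \<forall>y'\<in>open_mball X d y r. \<forall>z'\<in>open_mball X d z r.
         (\<exists>\<gamma>\<in>Geo X d. \<gamma> 0 = x' \<and> \<gamma> 1 = y' \<and>
            Liminf (at_right 0) (\<lambda>t. ereal ((d (\<gamma> t) z' - d x' z') / t))
              \<ge> ereal (- (1 - \<rho>) * d x' y'))))"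

definition is_norm :: "('a::real_vector \<Rightarrow> real) \<Rightarrow> bool" where
  "is_norm N \<longleftrightarrow> (\<forall>x. N x \<ge> 0) \<and> (\<forall>x. N x = 0 \<longleftrightarrow> x = 0) \<and>
     (\<forall>c x. N (c *\<^sub>R x) = \<bar>c\<bar> * N x) \<and> (\<forall>x y. N (x + y) \<le> N x + N y)"

definition strictly_convex_norm :: "('a::real_vector \<Rightarrow> real) \<Rightarrow> bool" where
  "strictly_convex_norm N \<longleftrightarrow> (\<forall>x y t. N x = 1 \<and> N y = 1 \<and> x \<noteq> y \<and> 0 < t \<and> t < 1
      \<longrightarrow> N ((1 - t) *\<^sub>R x + t *\<^sub>R y) < 1)"

definition C1_away_from_origin :: "(real^'n \<Rightarrow> real) \<Rightarrow> bool" where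
  "C1_away_from_origin N \<longleftrightarrow> (\<exists>D :: real^'n \<Rightarrow> real^'n.
      (\<forall>x. x \<noteq> 0 \<longrightarrow> (N has_derivative (\<lambda>h. D x \<bullet> h)) (at x))
      \<and> continuous_on (UNIV - {0}) D)"

end

theory Submission
  imports Defs
begin

text \<open>
  Move x' to y' along the straight segment; the right derivative at 0 of t \<mapsto> N (\<gamma> t - z')
  is then \<nabla>N (x' - z') \<bullet> (y' - x'). At the reference configuration, \<nabla>N (x - z) is a
  supporting functional of the ball of radius N (x - z) which, by strict convexity, touches it
  only at x - z; as x - y \<noteq> x - z lies on the same sphere, \<nabla>N (x - z) \<bullet> (y - x) > - N (y - x).
  Continuity of the gradient makes this margin uniform near (x, y, z). The space is Polish
  because N is bi-Lipschitz equivalent to the Euclidean norm.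
\<close>

lemma is_norm_scaleR: "is_norm N \<Longrightarrow> N (c *\<^sub>R x) = \<bar>c\<bar> * N x"
  by (simp add: is_norm_def)

lemma is_norm_triangle: "is_norm N \<Longrightarrow> N (x + y) \<le> N x + N y"
  by (simp add: is_norm_def)

lemma is_norm_nonneg: "is_norm N \<Longrightarrow> 0 \<le> N x"
  by (simp add: is_norm_def)

lemma is_norm_eq_0_iff: "is_norm N \<Longrightarrow> N x = 0 \<longleftrightarrow> x = 0"
  by (simp add: is_norm_def)

lemma is_norm_zero: "is_norm N \<Longrightarrow> N 0 = 0"
  by (simp add: is_norm_def)

lemma is_norm_pos: "is_norm N \<Longrightarrow> x \<noteq> 0 \<Longrightarrow> 0 < N x"
  using is_norm_nonneg is_norm_eq_0_iff by (metis order_le_less)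

lemma is_norm_minus_commute: "is_norm N \<Longrightarrow> N (x - y) = N (y - x)"
  using is_norm_scaleR[of N "-1" "x - y"] by simp

lemma is_norm_convex:
  assumes "is_norm N"
  shows "convex_on UNIV N"
proof (rule convex_onI)
  fix t :: real and x y assume t: "0 < t" "t < 1"
  have "N ((1 - t) *\<^sub>R x + t *\<^sub>R y) \<le> N ((1 - t) *\<^sub>R x) + N (t *\<^sub>R y)"
    using is_norm_triangle[OF assms] .
  also have "\<dots> = (1 - t) * N x + t * N y"
    using t by (simp add: is_norm_scaleR[OF assms])
  finally show "N ((1 - t) *\<^sub>R x + t *\<^sub>R y) \<le> (1 - t) * N x + t * N y" .
qed simp

lemma is_norm_continuous:
  fixes N :: "'a::euclidean_space \<Rightarrow> real"
  shows "is_norm N \<Longrightarrow> continuous_on UNIV N"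
  using convex_on_continuous is_norm_convex by blast

lemma is_norm_Metric_space: "is_norm N \<Longrightarrow> Metric_space UNIV (\<lambda>x y. N (x - y))"
  by unfold_locales
    (auto simp: is_norm_nonneg is_norm_eq_0_iff intro: is_norm_minus_commute,
      metis is_norm_triangle diff_add_cancel add_diff_eq)

lemma is_norm_equivalent:
  fixes N :: "'a::euclidean_space \<Rightarrow> real"
  assumes "is_norm N"
  obtains m C where "0 < m" "\<And>x. m * norm x \<le> N x" "\<And>x. N x \<le> C * norm x"
proof -
  have "sphere (0::'a) 1 \<noteq> {}"
    using vector_choose_size[of 1] by auto
  then obtain p q where p: "p \<in> sphere 0 1" "\<And>y. y \<in> sphere 0 1 \<Longrightarrow> N p \<le> N y"
    and q: "q \<in> sphere 0 1" "\<And>y. y \<in> sphere 0 1 \<Longrightarrow> N y \<le> N q"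
    using continuous_attains_inf continuous_attains_sup compact_sphere
      continuous_on_subset[OF is_norm_continuous[OF assms]] by (metis subset_UNIV)
  have "N p * norm x \<le> N x \<and> N x \<le> N q * norm x" for x
  proof (cases "x = 0")
    case False
    define y where "y = (1 / norm x) *\<^sub>R x"
    have "N p \<le> N y" "N y \<le> N q"
      using p(2) q(2) False by (auto simp: y_def)
    moreover have "N x = N y * norm x"
      using False by (simp add: y_def is_norm_scaleR[OF assms])
    ultimately show ?thesis
      by (simp add: mult_right_mono)
  qed (simp add: is_norm_zero[OF assms])
  moreover have "0 < N p"
    using p(1) is_norm_pos[OF assms, of p] by fastforce
  ultimately show thesis using that by blast
qed

lemma bi_Lipschitz_mtopology_eq_euclidean:
  fixes d :: "'a::metric_space \<Rightarrow> 'a \<Rightarrow> real"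
  assumes "Metric_space UNIV d" and "0 < m"
    and lower: "\<And>x y. m * dist x y \<le> d x y" and upper: "\<And>x y. d x y \<le> C * dist x y"
  shows "Metric_space.mtopology UNIV d = euclidean"
proof -
  interpret M: Metric_space UNIV d by fact
  have "M.mball x (m * e) \<subseteq> ball x e" for x e
  proof
    fix y assume "y \<in> M.mball x (m * e)"
    then have "m * dist x y < m * e"
      using lower[of x y] by simp
    then show "y \<in> ball x e"
      using \<open>0 < m\<close> by simp
  qed
  moreover have "ball x (r / (\<bar>C\<bar> + 1)) \<subseteq> M.mball x r" for x r
  proof
    fix y assume "y \<in> ball x (r / (\<bar>C\<bar> + 1))"
    then have "(\<bar>C\<bar> + 1) * dist x y < r"
      by (simp add: field_simps add_pos_nonneg)
    moreover have "C * dist x y \<le> (\<bar>C\<bar> + 1) * dist x y"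
      by (intro mult_right_mono) auto
    ultimately show "y \<in> M.mball x r"
      using upper[of x y] by simp
  qed
  ultimately show ?thesis
    using \<open>0 < m\<close>
    unfolding topology_eq M.openin_mtopology open_openin[symmetric] open_contains_ball
    by (smt (verit) divide_pos_pos mult_pos_pos subset_UNIV subset_trans)
qed

lemma separable_space_euclidean:
  "separable_space (euclidean :: 'a::second_countable_topology topology)"
proof -
  obtain D :: "'a set" where "countable D" and D: "\<And>X. open X \<Longrightarrow> X \<noteq> {} \<Longrightarrow> \<exists>d\<in>D. d \<in> X"
    by (erule countable_dense_setE)
  have "closure D = UNIV"
    using D[of "- closure D"] closure_subset by blast
  then show ?thesis
    unfolding separable_space_def using \<open>countable D\<close> by auto
qed

lemma is_norm_polish:
  fixes N :: "'a::euclidean_space \<Rightarrow> real"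
  assumes "is_norm N"
  shows "polish_metric UNIV (\<lambda>x y. N (x - y))"
proof -
  interpret M: Metric_space UNIV "\<lambda>x y. N (x - y)"
    by (rule is_norm_Metric_space[OF assms])
  obtain m C where m: "0 < m" "\<And>x. m * norm x \<le> N x" and C: "\<And>x. N x \<le> C * norm x"
    using is_norm_equivalent[OF assms] by blast
  have top: "M.mtopology = euclidean"
    by (rule bi_Lipschitz_mtopology_eq_euclidean[OF M.Metric_space_axioms m(1)])
      (use m(2) C in \<open>simp_all add: dist_norm\<close>)
  have "Cauchy \<sigma>" if \<sigma>: "M.MCauchy \<sigma>" for \<sigma>
  proof (rule CauchyI)
    fix e :: real assume "0 < e"
    then obtain K where "\<forall>a b. K \<le> a \<longrightarrow> K \<le> b \<longrightarrow> N (\<sigma> a - \<sigma> b) < m * e"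
      using \<sigma> m(1) unfolding M.MCauchy_def by (meson mult_pos_pos)
    then have "\<forall>a\<ge>K. \<forall>b\<ge>K. m * norm (\<sigma> a - \<sigma> b) < m * e"
      using m(2) le_less_trans by blast
    then show "\<exists>K. \<forall>a\<ge>K. \<forall>b\<ge>K. norm (\<sigma> a - \<sigma> b) < e"
      using m(1) by auto
  qed
  then have "M.mcomplete"
    unfolding M.mcomplete_def top by (auto simp: Cauchy_convergent_iff convergent_def)
  then show ?thesis
    unfolding polish_metric_def top using M.Metric_space_axioms separable_space_euclidean by blast
qed

lemma has_derivative_directional_quotient:
  fixes f :: "'a::real_normed_vector \<Rightarrow> real"
  assumes "(f has_derivative f') (at u)"
  shows "((\<lambda>t. (f (u + t *\<^sub>R h) - f u) / t) \<longlongrightarrow> f' h) (at_right 0)"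
proof -
  have "((\<lambda>t::real. u + t *\<^sub>R h) has_derivative (\<lambda>t. t *\<^sub>R h)) (at 0)"
    by (auto intro!: derivative_eq_intros)
  from diff_chain_at[OF this] assms
  have "((\<lambda>t. f (u + t *\<^sub>R h)) has_derivative (\<lambda>t. f' (t *\<^sub>R h))) (at 0)"
    by (simp add: o_def)
  moreover have "(\<lambda>t. f' (t *\<^sub>R h)) = (*) (f' h)"
    using linear_cmul[OF has_derivative_linear[OF assms]] by (auto simp: mult.commute)
  ultimately have "((\<lambda>t. f (u + t *\<^sub>R h)) has_field_derivative f' h) (at 0)"
    by (simp add: has_field_derivative_def)
  then have "((\<lambda>t. (f (u + t *\<^sub>R h) - f u) / t) \<longlongrightarrow> f' h) (at 0)"
    by (simp add: has_field_derivative_iff)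
  then show ?thesis
    by (rule tendsto_mono[OF at_le, rotated]) simp
qed

lemma is_norm_derivative_le:
  assumes "is_norm N" and "(N has_derivative N') (at u)"
  shows "N' h \<le> N h"
proof (rule tendsto_upperbound[OF has_derivative_directional_quotient[OF assms(2)]])
  show "\<forall>\<^sub>F t in at_right 0. (N (u + t *\<^sub>R h) - N u) / t \<le> N h"
  proof (rule eventually_at_right_less[THEN eventually_mono])
    fix t :: real assume "0 < t"
    then have "N (u + t *\<^sub>R h) \<le> N u + t * N h"
      using is_norm_triangle[OF assms(1), of u "t *\<^sub>R h"] by (simp add: is_norm_scaleR[OF assms(1)])
    then show "(N (u + t *\<^sub>R h) - N u) / t \<le> N h"
      using \<open>0 < t\<close> by (simp add: divide_le_eq mult.commute)
  qed
qed simp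

lemma is_norm_derivative_self:
  assumes "is_norm N" and "(N has_derivative N') (at u)"
  shows "N' u = N u"
proof (rule tendsto_unique[OF _ has_derivative_directional_quotient[OF assms(2)]])
  have "(N (u + t *\<^sub>R u) - N u) / t = N u" if "0 < t" for t
  proof -
    have "N (u + t *\<^sub>R u) = N ((1 + t) *\<^sub>R u)"
      by (simp add: algebra_simps)
    also have "\<dots> = (1 + t) * N u"
      using that by (simp add: is_norm_scaleR[OF assms(1)])
    finally show ?thesis
      using that by (simp add: field_simps)
  qed
  then show "((\<lambda>t. (N (u + t *\<^sub>R u) - N u) / t) \<longlongrightarrow> N u) (at_right 0)"
    by (rule tendsto_eventually[OF eventually_at_right_less[THEN eventually_mono]])
qed simp

lemma strictly_convex_norm_midpoint_less:
  assumes N: "is_norm N" and sc: "strictly_convex_norm N" and "N a = N b" "a \<noteq> b"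
  shows "N ((1/2) *\<^sub>R (a + b)) < N a"
proof -
  define L where "L = N a"
  have "0 < L"
    using assms(3,4) is_norm_pos[OF N] is_norm_eq_0_iff[OF N] unfolding L_def by metis
  have "N ((1/L) *\<^sub>R a) = 1" "N ((1/L) *\<^sub>R b) = 1" "(1/L) *\<^sub>R a \<noteq> (1/L) *\<^sub>R b"
    using assms(3,4) \<open>0 < L\<close> by (simp_all add: is_norm_scaleR[OF N] L_def)
  moreover have "0 < (1/2::real)" "(1/2::real) < 1"
    by simp_all
  ultimately have "N ((1 - 1/2) *\<^sub>R ((1/L) *\<^sub>R a) + (1/2) *\<^sub>R ((1/L) *\<^sub>R b)) < 1"
    using sc unfolding strictly_convex_norm_def by blast
  moreover have "(1 - 1/2) *\<^sub>R ((1/L) *\<^sub>R a) + (1/2) *\<^sub>R ((1/L) *\<^sub>R b) = (1/L) *\<^sub>R ((1/2) *\<^sub>R (a + b))"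
    by (simp add: algebra_simps)
  ultimately show ?thesis
    using \<open>0 < L\<close> by (simp add: is_norm_scaleR[OF N] L_def)
qed

lemma strictly_convex_norm_derivative_less:
  assumes N: "is_norm N" and sc: "strictly_convex_norm N"
    and D: "(N has_derivative N') (at u)" and "N b = N u" "b \<noteq> u"
  shows "N' b < N b"
proof (rule ccontr)
  assume "\<not> N' b < N b"
  then have "N' b = N b"
    using is_norm_derivative_le[OF N D] by (simp add: order.antisym)
  then have "N' ((1/2) *\<^sub>R (u + b)) = N u"
    using is_norm_derivative_self[OF N D] \<open>N b = N u\<close> has_derivative_linear[OF D]
    by (simp add: linear_add linear_cmul)
  moreover have "N ((1/2) *\<^sub>R (u + b)) < N u"
    using strictly_convex_norm_midpoint_less[OF N sc] assms(4,5) by metis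
  ultimately show False
    using is_norm_derivative_le[OF N D] by (metis not_le)
qed

lemma is_norm_line_in_Geo:
  assumes "is_norm N"
  shows "(\<lambda>t. x + t *\<^sub>R (y - x)) \<in> Geo UNIV (\<lambda>x y. N (x - y))"
  unfolding Geo_def
proof (intro CollectI conjI ballI)
  fix s t :: real
  have "(x + s *\<^sub>R (y - x)) - (x + t *\<^sub>R (y - x)) = (t - s) *\<^sub>R (x - y)"
    by (simp add: algebra_simps)
  then show "N ((x + s *\<^sub>R (y - x)) - (x + t *\<^sub>R (y - x))) = \<bar>t - s\<bar> * N ((x + 0 *\<^sub>R (y - x)) - (x + 1 *\<^sub>R (y - x)))"
    by (simp add: is_norm_scaleR[OF assms])
qed simp

lemma Liminf_line_difference_quotient:
  assumes "(f has_derivative f') (at (x - z))"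
  shows "Liminf (at_right 0) (\<lambda>t. ereal ((f ((x + t *\<^sub>R (y - x)) - z) - f (x - z)) / t))
    = ereal (f' (y - x))"
proof (rule lim_imp_Liminf[OF trivial_limit_at_right_real])
  have "(\<lambda>t. (f ((x + t *\<^sub>R (y - x)) - z) - f (x - z)) / t)
    = (\<lambda>t. (f ((x - z) + t *\<^sub>R (y - x)) - f (x - z)) / t)"
    by (simp add: algebra_simps)
  then show "((\<lambda>t. ereal ((f ((x + t *\<^sub>R (y - x)) - z) - f (x - z)) / t)) \<longlongrightarrow> ereal (f' (y - x))) (at_right 0)"
    using has_derivative_directional_quotient[OF assms] by (intro tendsto_ereal) simp
qed

lemma isCont_gt_on_product_balls:
  fixes f :: "'a::metric_space \<times> 'b::metric_space \<Rightarrow> real"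
  assumes "isCont f (a, b)" and "c < f (a, b)"
  obtains \<epsilon> where "0 < \<epsilon>" "\<And>w v. dist w a < \<epsilon> \<Longrightarrow> dist v b < \<epsilon> \<Longrightarrow> c < f (w, v)"
proof -
  have "\<forall>\<^sub>F q in nhds (a, b). c < f q"
    using assms by (simp add: isCont_def tendsto_at_iff_tendsto_nhds order_tendstoD)
  then obtain e where "0 < e" and e: "\<And>q. dist q (a, b) < e \<Longrightarrow> c < f q"
    by (auto simp: eventually_nhds_metric)
  have "c < f (w, v)" if "dist w a < e / 2" "dist v b < e / 2" for w v
  proof (rule e)
    have "dist (w, v) (a, b) \<le> dist w a + dist v b"
      unfolding dist_Pair_Pair by (rule sqrt_sum_squares_le_sum) auto
    then show "dist (w, v) (a, b) < e"
      using that by linarith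
  qed
  then show thesis
    using that[of "e / 2"] \<open>0 < e\<close> by simp
qed

lemma strictly_convex_norm_local_gradient_bound:
  fixes N :: "'a::euclidean_space \<Rightarrow> real" and D :: "'a \<Rightarrow> 'a"
  assumes N: "is_norm N" and sc: "strictly_convex_norm N"
    and D: "\<And>w. w \<noteq> 0 \<Longrightarrow> (N has_derivative (\<lambda>h. D w \<bullet> h)) (at w)"
    and cD: "continuous_on (UNIV - {0}) D"
    and "y \<noteq> z" and eq: "N (x - y) = N (x - z)"
  obtains \<delta> \<rho> where "0 < \<delta>" "0 < \<rho>"
    "\<And>x' y' z'. norm (x' - x) < \<delta> \<Longrightarrow> norm (y' - y) < \<delta> \<Longrightarrow> norm (z' - z) < \<delta> \<Longrightarrow>
       x' \<noteq> z' \<and> - (1 - \<rho>) * N (y' - x') \<le> D (x' - z') \<bullet> (y' - x')"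
proof -
  define u where "u = x - z"
  define v where "v = y - x"
  have "u \<noteq> 0"
  proof
    assume "u = 0"
    then have "x = z" by (simp add: u_def)
    with eq have "x = y" by (simp add: is_norm_zero[OF N] is_norm_eq_0_iff[OF N])
    with \<open>x = z\<close> \<open>y \<noteq> z\<close> show False by simp
  qed
  have Nv: "N v = N u"
    using eq is_norm_minus_commute[OF N] unfolding u_def v_def by metis
  have "D u \<bullet> (x - y) < N (x - y)"
    using strictly_convex_norm_derivative_less[OF N sc D[OF \<open>u \<noteq> 0\<close>]] eq \<open>y \<noteq> z\<close>
    unfolding u_def by auto
  then have c: "0 < D u \<bullet> v + N v"
    using eq Nv unfolding u_def v_def by (simp add: inner_diff_right)
  have "0 < N v"
    using Nv is_norm_pos[OF N \<open>u \<noteq> 0\<close>] by simp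
  define \<rho> where "\<rho> = (D u \<bullet> v + N v) / (2 * N v)"
  have "0 < \<rho>"
    using c \<open>0 < N v\<close> by (simp add: \<rho>_def)
  define G where "G = (\<lambda>q. D (fst q) \<bullet> snd q + (1 - \<rho>) * N (snd q))"
  have "G (u, v) = (D u \<bullet> v + N v) / 2"
    using \<open>0 < N v\<close> by (simp add: G_def \<rho>_def field_simps)
  then have "0 < G (u, v)"
    using c by simp
  have "isCont G (u, v)"
  proof -
    have "isCont D u"
      using cD \<open>u \<noteq> 0\<close> by (simp add: continuous_on_eq_continuous_at open_delete)
    moreover have "isCont N a" for a
      using is_norm_continuous[OF N] by (simp add: continuous_on_eq_continuous_at)
    ultimately show ?thesis
      unfolding G_def by (intro continuous_intros isCont_o2[OF isCont_fst[OF continuous_ident]]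
          isCont_o2[OF isCont_snd[OF continuous_ident]]) auto
  qed
  then obtain \<epsilon> where "0 < \<epsilon>"
    and \<epsilon>: "\<And>w v'. dist w u < \<epsilon> \<Longrightarrow> dist v' v < \<epsilon> \<Longrightarrow> 0 < G (w, v')"
    using isCont_gt_on_product_balls \<open>0 < G (u, v)\<close> by blast
  define \<delta> where "\<delta> = min \<epsilon> (norm u) / 2"
  show thesis
  proof (rule that)
    show "0 < \<delta>"
      using \<open>0 < \<epsilon>\<close> \<open>u \<noteq> 0\<close> by (simp add: \<delta>_def)
    show "0 < \<rho>" by fact
    fix x' y' z'
    assume "norm (x' - x) < \<delta>" "norm (y' - y) < \<delta>" "norm (z' - z) < \<delta>"
    moreover have "dist (x' - z') u \<le> norm (x' - x) + norm (z' - z)"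
      unfolding u_def dist_norm using norm_triangle_ineq4[of "x' - x" "z' - z"]
      by (simp add: algebra_simps)
    moreover have "dist (y' - x') v \<le> norm (y' - y) + norm (x' - x)"
      unfolding v_def dist_norm using norm_triangle_ineq4[of "y' - y" "x' - x"]
      by (simp add: algebra_simps)
    ultimately have "dist (x' - z') u < \<epsilon>" "dist (x' - z') u < norm u" "dist (y' - x') v < \<epsilon>"
      unfolding \<delta>_def by linarith+
    then have "x' \<noteq> z'" and "0 < G (x' - z', y' - x')"
      using \<epsilon> by auto
    then show "x' \<noteq> z' \<and> - (1 - \<rho>) * N (y' - x') \<le> D (x' - z') \<bullet> (y' - x')"
      unfolding G_def by (simp add: algebra_simps)
  qed
qed

lemma strictly_convex_norm_locally_uniformly_non_branching_at:
  fixes N :: "'a::euclidean_space \<Rightarrow> real" and D :: "'a \<Rightarrow> 'a"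
  assumes N: "is_norm N" and sc: "strictly_convex_norm N"
    and D: "\<And>w. w \<noteq> 0 \<Longrightarrow> (N has_derivative (\<lambda>h. D w \<bullet> h)) (at w)"
    and cD: "continuous_on (UNIV - {0}) D"
    and yz: "y \<noteq> z" "N (x - y) = N (x - z)"
  shows "\<exists>r>0. \<exists>\<rho>>0. \<forall>x'\<in>open_mball UNIV (\<lambda>x y. N (x - y)) x r.
           \<forall>y'\<in>open_mball UNIV (\<lambda>x y. N (x - y)) y r. \<forall>z'\<in>open_mball UNIV (\<lambda>x y. N (x - y)) z r.
         (\<exists>\<gamma>\<in>Geo UNIV (\<lambda>x y. N (x - y)). \<gamma> 0 = x' \<and> \<gamma> 1 = y' \<and>
            Liminf (at_right 0) (\<lambda>t. ereal ((N (\<gamma> t - z') - N (x' - z')) / t))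
              \<ge> ereal (- (1 - \<rho>) * N (x' - y')))"
proof -
  obtain \<delta> \<rho> where "0 < \<delta>" "0 < \<rho>" and bound:
    "\<And>x' y' z'. norm (x' - x) < \<delta> \<Longrightarrow> norm (y' - y) < \<delta> \<Longrightarrow> norm (z' - z) < \<delta> \<Longrightarrow>
       x' \<noteq> z' \<and> - (1 - \<rho>) * N (y' - x') \<le> D (x' - z') \<bullet> (y' - x')"
    using strictly_convex_norm_local_gradient_bound[OF N sc D cD yz] by blast
  obtain m where "0 < m" and m: "\<And>v. m * norm v \<le> N v"
    using is_norm_equivalent[OF N] by blast
  have near: "norm (a' - a) < \<delta>" if "a' \<in> open_mball UNIV (\<lambda>x y. N (x - y)) a (m * \<delta>)" for a a'
  proof -
    have "m * norm (a' - a) < m * \<delta>"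
      using that m[of "a' - a"] is_norm_minus_commute[OF N, of a a'] by (simp add: open_mball_def)
    then show ?thesis
      using \<open>0 < m\<close> by simp
  qed
  have line: "\<exists>\<gamma>\<in>Geo UNIV (\<lambda>x y. N (x - y)). \<gamma> 0 = x' \<and> \<gamma> 1 = y' \<and>
      Liminf (at_right 0) (\<lambda>t. ereal ((N (\<gamma> t - z') - N (x' - z')) / t))
        \<ge> ereal (- (1 - \<rho>) * N (x' - y'))"
    if "norm (x' - x) < \<delta>" "norm (y' - y) < \<delta>" "norm (z' - z) < \<delta>" for x' y' z'
  proof (rule bexI[OF _ is_norm_line_in_Geo[OF N]], intro conjI)
    have "x' \<noteq> z'" and "- (1 - \<rho>) * N (y' - x') \<le> D (x' - z') \<bullet> (y' - x')"
      using bound that by blast+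
    then show "Liminf (at_right 0) (\<lambda>t. ereal ((N ((x' + t *\<^sub>R (y' - x')) - z') - N (x' - z')) / t))
        \<ge> ereal (- (1 - \<rho>) * N (x' - y'))"
      using Liminf_line_difference_quotient[OF D] is_norm_minus_commute[OF N, of x' y']
      by simp
  qed simp_all
  show ?thesis
    by (intro exI[of _ "m * \<delta>"] exI[of _ \<rho>] conjI ballI line near mult_pos_pos) fact+
qed

theorem mainTheorem8:
  fixes N :: "real^'n \<Rightarrow> real"
  assumes "is_norm N"
    and "C1_away_from_origin N"
    and "strictly_convex_norm N"
  shows "locally_uniformly_non_branching (UNIV :: (real^'n) set) (\<lambda>x y. N (x - y))"
proof -
  obtain D :: "real^'n \<Rightarrow> real^'n"
    where D: "\<And>w. w \<noteq> 0 \<Longrightarrow> (N has_derivative (\<lambda>h. D w \<bullet> h)) (at w)"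
      and cD: "continuous_on (UNIV - {0}) D"
    using assms(2) unfolding C1_away_from_origin_def by blast
  show ?thesis
    unfolding locally_uniformly_non_branching_def
    by (intro conjI ballI impI is_norm_polish[OF assms(1)]
        strictly_convex_norm_locally_uniformly_non_branching_at[OF assms(1,3) D cD]) auto
qed

end
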